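(* Let $n\geq 1$, let $M$ be a message and $\phi$ a formula, and let $\heartsuit_1,\dots,\heartsuit_n$ be modal prefixes each of which is either $[M]$ or $\langle M\rangle$ (same $M$ throughout). (1) If all $\heartsuit_i$ are $[M]$, then $\vdash(\heartsuit_1\cdots\heartsuit_n\phi)\leftrightarrow[M]\phi$. (2) If at least one $\heartsuit_i$ is $\langle M\rangle$, then $\vdash(\heartsuit_1\cdots\heartsuit_n\phi)\leftrightarrow\langle M\rangle\phi$.
   Context: Fix a finite set $\mathcal{A}$ of agent names containing a distinguished name $\mathsf{CM}$. Messages: $M ::= a \mid B \mid (M,M)$ with $a\in\mathcal{A}$, $B$ optional application-specific data constants, $(M,M')$ pairs. $\mathcal{P}$ is a denumerable set of propositional variables containing atoms $\mathsf{k}_a(M)$ for all $a\in\mathcal{A}$ and messages $M$. Formulas: $\phi ::= P \mid \phi\wedge\phi \mid \phi\vee\phi \mid \neg\phi \mid \phi\to\phi \mid [M]\phi$. Abbreviations: $\mathrm{true}:=\mathsf{k}_{\mathsf{CM}}(\mathsf{CM})$, $\mathrm{false}:=\neg\mathrm{true}$, $\phi\leftrightarrow\psi:=(\phi\to\psi)\wedge(\psi\to\phi)$, $\langle M\rangle\phi:=\neg\neg(\mathsf{k}_{\mathsf{CM}}(M)\wedge\phi)$. LIiP is the smallest set of formulas that contains all instances of: the axioms of an adequate Hilbert axiomatization of intuitionistic propositional logic; $\mathsf{k}_a(a)$; $(\mathsf{k}_a(M)\wedge\mathsf{k}_a(M'))\leftrightarrow\mathsf{k}_a((M,M'))$; $[M]\mathsf{k}_{\mathsf{CM}}(M)$;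 $[M](\phi\to\psi)\to([M]\phi\to[M]\psi)$; $[M]\phi\to(\mathsf{k}_{\mathsf{CM}}(M)\to\phi)$; $[M]\phi\to\langle M\rangle\phi$; $\phi\to[M]\phi$; and is closed under modus ponens and the rule: if $\mathsf{k}_{\mathsf{CM}}(M)\to\mathsf{k}_{\mathsf{CM}}(M')$ is in the set then so is $[M']\phi\to[M]\phi$ for every $\phi$. Write $\vdash\phi$ for $\phi\in\mathrm{LIiP}$. *)

theory Defs
  imports Main
begin

datatype 'a agent = CM | Ag 'a

datatype ('a, 'b) msg = Name "'a agent" | Data 'b | MPair "('a, 'b) msg" "('a, 'b) msg"

text \<open>Formulas. Propositional variables: atoms k_a(M) plus a denumerable
  supply of further variables PV n.\<close>
datatype ('a, 'b) form =
    K "'a agent" "('a, 'b) msg"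
  | PV nat
  | FAnd "('a, 'b) form" "('a, 'b) form"
  | FOr "('a, 'b) form" "('a, 'b) form"
  | FNeg "('a, 'b) form"
  | FImp "('a, 'b) form" "('a, 'b) form"
  | Box "('a, 'b) msg" "('a, 'b) form"

definition FTrue :: "('a, 'b) form" where
  "FTrue = K CM (Name CM)"

definition FFalse :: "('a, 'b) form" where
  "FFalse = FNeg FTrue"

definition FIff :: "('a, 'b) form \<Rightarrow> ('a, 'b) form \<Rightarrow> ('a, 'b) form" where
  "FIff p q = FAnd (FImp p q) (FImp q p)"

definition Dia :: "('a, 'b) msg \<Rightarrow> ('a, 'b) form \<Rightarrow> ('a, 'b) form" where
  "Dia M p = FNeg (FNeg (FAnd (K CM M) p))"

text \<open>LIiP, with a standard Hilbert axiomatization of intuitionistic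
  propositional logic (Kleene's axioms, negation primitive).\<close>
inductive LIiP :: "('a::finite, 'b) form \<Rightarrow> bool" where
  ax1: "LIiP (FImp p (FImp q p))"
| ax2: "LIiP (FImp (FImp p (FImp q r)) (FImp (FImp p q) (FImp p r)))"
| ax3: "LIiP (FImp (FAnd p q) p)"
| ax4: "LIiP (FImp (FAnd p q) q)"
| ax5: "LIiP (FImp p (FImp q (FAnd p q)))"
| ax6: "LIiP (FImp p (FOr p q))"
| ax7: "LIiP (FImp q (FOr p q))"
| ax8: "LIiP (FImp (FImp p r) (FImp (FImp q r) (FImp (FOr p q) r)))"
| ax9: "LIiP (FImp (FImp p q) (FImp (FImp p (FNeg q)) (FNeg p)))"
| ax10: "LIiP (FImp (FNeg p) (FImp p q))"
| kself: "LIiP (K a (Name a))"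
| kpair: "LIiP (FIff (FAnd (K a M) (K a M')) (K a (MPair M M')))"
| boxk: "LIiP (Box M (K CM M))"
| boxK: "LIiP (FImp (Box M (FImp p q)) (FImp (Box M p) (Box M q)))"
| boxT: "LIiP (FImp (Box M p) (FImp (K CM M) p))"
| boxdia: "LIiP (FImp (Box M p) (Dia M p))"
| unit: "LIiP (FImp p (Box M p))"
| mp: "LIiP (FImp p q) \<Longrightarrow> LIiP p \<Longrightarrow> LIiP q"
| mono: "LIiP (FImp (K CM M) (K CM M')) \<Longrightarrow> LIiP (FImp (Box M' p) (Box M p))"

text \<open>Modal prefix: True stands for [M], False for <M>; the list
  [h1,...,hn] applied to p gives h1 ... hn p.\<close>
fun prefix :: "bool list \<Rightarrow> ('a, 'b) msg \<Rightarrow> ('a, 'b) form \<Rightarrow> ('a, 'b) form" where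
  "prefix [] M p = p"
| "prefix (h # hs) M p = (if h then Box M (prefix hs M p) else Dia M (prefix hs M p))"

end

theory Submission
  imports Defs
begin

text \<open>Every two-letter word over [M] and <M> is equivalent to a single modality:
  [M][M]p collapses since [M][M]p \<rightarrow> [M](k_CM(M) \<rightarrow> p) and [M]k_CM(M) holds;
  <M>[M]p since the conjunct k_CM(M) inside <M> lets the box be dropped; <M><M>p since
  \<not>\<not>(k \<and> \<not>\<not>q) \<rightarrow> \<not>\<not>\<not>\<not>q \<rightarrow> \<not>\<not>q intuitionistically; and [M]<M>p via [M]q \<rightarrow> <M>q and
  the previous case.  In each case the word collapses to [M] iff both letters are [M], so
  induction on the prefix shows that it collapses to [M] if it consists of boxes only and to
  <M> otherwise.\<close>

inductive derives :: "('a::finite, 'b) form set \<Rightarrow> ('a, 'b) form \<Rightarrow> bool" for G where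
  derives_theorem: "LIiP p \<Longrightarrow> derives G p"
| derives_hyp: "p \<in> G \<Longrightarrow> derives G p"
| derives_mp: "derives G (FImp p q) \<Longrightarrow> derives G p \<Longrightarrow> derives G q"

lemma LIiP_imp_refl: "LIiP (FImp p p)"
proof -
  have "LIiP (FImp (FImp p (FImp (FImp p p) p)) (FImp (FImp p (FImp p p)) (FImp p p)))"
    by (rule ax2)
  then have "LIiP (FImp (FImp p (FImp p p)) (FImp p p))" using ax1 by (rule mp)
  then show ?thesis using ax1 by (rule mp)
qed

lemma derives_deduction:
  assumes "derives (insert a G) b"
  shows "derives G (FImp a b)"
  using assms
proof (induction rule: derives.induct)
  case (derives_theorem p)
  then show ?case by (meson derives.intros ax1)
next
  case (derives_hyp p)
  then show ?case by (metis derives.intros LIiP_imp_refl ax1 insert_iff)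
next
  case (derives_mp p q)
  then show ?case by (meson derives.intros ax2)
qed

lemma LIiP_iff_derives_empty: "LIiP p \<longleftrightarrow> derives {} p"
proof
  show "derives {} p \<Longrightarrow> LIiP p"
    by (induction rule: derives.induct) (auto intro: mp)
qed (rule derives_theorem)

lemma LIiP_impI: "derives {a} b \<Longrightarrow> LIiP (FImp a b)"
  using derives_deduction LIiP_iff_derives_empty by blast

lemma derives_conjI: "derives G a \<Longrightarrow> derives G b \<Longrightarrow> derives G (FAnd a b)"
  by (meson derives_mp derives_theorem ax5)

lemma derives_conjD1: "derives G (FAnd a b) \<Longrightarrow> derives G a"
  by (meson derives_mp derives_theorem ax3)

lemma derives_conjD2: "derives G (FAnd a b) \<Longrightarrow> derives G b"
  by (meson derives_mp derives_theorem ax4)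

lemma derives_notI:
  "derives (insert a G) b \<Longrightarrow> derives (insert a G) (FNeg b) \<Longrightarrow> derives G (FNeg a)"
  by (meson derives_mp derives_theorem ax9 derives_deduction)

lemma derives_by_LIiP_imp: "LIiP (FImp a b) \<Longrightarrow> derives G a \<Longrightarrow> derives G b"
  by (meson derives_mp derives_theorem)

lemma LIiP_imp_trans: "LIiP (FImp p q) \<Longrightarrow> LIiP (FImp q r) \<Longrightarrow> LIiP (FImp p r)"
  by (meson LIiP_impI derives_by_LIiP_imp derives_hyp singletonI)

lemma LIiP_iffI: "LIiP (FImp p q) \<Longrightarrow> LIiP (FImp q p) \<Longrightarrow> LIiP (FIff p q)"
  unfolding FIff_def by (meson ax5 mp)

lemma LIiP_iffD1: "LIiP (FIff p q) \<Longrightarrow> LIiP (FImp p q)"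
  unfolding FIff_def by (meson ax3 mp)

lemma LIiP_iffD2: "LIiP (FIff p q) \<Longrightarrow> LIiP (FImp q p)"
  unfolding FIff_def by (meson ax4 mp)

lemma LIiP_iff_refl: "LIiP (FIff p p)"
  by (simp add: LIiP_imp_refl LIiP_iffI)

lemma LIiP_iff_trans: "LIiP (FIff p q) \<Longrightarrow> LIiP (FIff q r) \<Longrightarrow> LIiP (FIff p r)"
  by (meson LIiP_iffD1 LIiP_iffD2 LIiP_iffI LIiP_imp_trans)

lemma LIiP_not_notI: "LIiP (FImp p (FNeg (FNeg p)))"
proof (rule LIiP_impI, rule derives_notI)
  show "derives {FNeg p, p} p" "derives {FNeg p, p} (FNeg p)"
    by (simp_all add: derives_hyp)
qed

lemma LIiP_not_not_mono:
  assumes "LIiP (FImp p q)"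
  shows "LIiP (FImp (FNeg (FNeg p)) (FNeg (FNeg q)))"
proof (rule LIiP_impI, rule derives_notI)
  have "derives {p, FNeg q, FNeg (FNeg p)} q"
    using assms by (simp add: derives_by_LIiP_imp derives_hyp)
  then show "derives {FNeg q, FNeg (FNeg p)} (FNeg p)"
    by (rule derives_notI) (simp add: derives_hyp)
  show "derives {FNeg q, FNeg (FNeg p)} (FNeg (FNeg p))"
    by (simp add: derives_hyp)
qed

lemma LIiP_not_not_not: "LIiP (FImp (FNeg (FNeg (FNeg p))) (FNeg p))"
proof (rule LIiP_impI, rule derives_notI)
  show "derives {p, FNeg (FNeg (FNeg p))} (FNeg (FNeg p))"
    by (rule derives_by_LIiP_imp[OF LIiP_not_notI]) (simp add: derives_hyp)
  show "derives {p, FNeg (FNeg (FNeg p))} (FNeg (FNeg (FNeg p)))"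
    by (simp add: derives_hyp)
qed

lemma LIiP_conj_mono_right: "LIiP (FImp p q) \<Longrightarrow> LIiP (FImp (FAnd k p) (FAnd k q))"
  by (meson LIiP_impI derives_by_LIiP_imp derives_conjD1 derives_conjD2 derives_conjI
      derives_hyp singletonI)

lemma LIiP_nec: "LIiP p \<Longrightarrow> LIiP (Box M p)"
  by (meson mp unit)

lemma LIiP_box_mono: "LIiP (FImp p q) \<Longrightarrow> LIiP (FImp (Box M p) (Box M q))"
  by (meson boxK mp LIiP_nec)

lemma LIiP_dia_mono: "LIiP (FImp p q) \<Longrightarrow> LIiP (FImp (Dia M p) (Dia M q))"
  unfolding Dia_def by (intro LIiP_not_not_mono LIiP_conj_mono_right)

lemma LIiP_prefix_cong: "LIiP (FIff p q) \<Longrightarrow> LIiP (FIff (prefix hs M p) (prefix hs M q))"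
  by (induction hs) (auto intro: LIiP_iffI dest: LIiP_iffD1 LIiP_iffD2
      LIiP_box_mono LIiP_dia_mono)

lemma LIiP_box_box: "LIiP (FIff (Box M (Box M p)) (Box M p))"
proof (rule LIiP_iffI[OF _ unit])
  have "LIiP (FImp (Box M (Box M p)) (Box M (FImp (K CM M) p)))"
    by (rule LIiP_box_mono[OF boxT])
  then show "LIiP (FImp (Box M (Box M p)) (Box M p))"
    by (meson LIiP_impI boxK boxk derives_by_LIiP_imp derives_mp derives_theorem
        derives_hyp singletonI)
qed

lemma LIiP_dia_dia: "LIiP (FIff (Dia M (Dia M p)) (Dia M p))"
proof (rule LIiP_iffI)
  have "LIiP (FImp (Dia M (Dia M p)) (FNeg (FNeg (Dia M p))))"
    unfolding Dia_def[of M "Dia M p"] by (intro LIiP_not_not_mono ax4)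
  then show "LIiP (FImp (Dia M (Dia M p)) (Dia M p))"
    unfolding Dia_def[of M p] using LIiP_imp_trans LIiP_not_not_not by blast
  have "LIiP (FImp (FAnd (K CM M) p) (FAnd (K CM M) (Dia M p)))"
    unfolding Dia_def
    by (meson LIiP_impI LIiP_not_notI derives_by_LIiP_imp derives_conjD1 derives_conjI
        derives_hyp singletonI)
  then show "LIiP (FImp (Dia M p) (Dia M (Dia M p)))"
    unfolding Dia_def[of M "Dia M p"] unfolding Dia_def[of M p] by (rule LIiP_not_not_mono)
qed

lemma LIiP_box_dia: "LIiP (FIff (Box M (Dia M p)) (Dia M p))"
  using LIiP_iffI[OF LIiP_imp_trans[OF boxdia LIiP_iffD1[OF LIiP_dia_dia]] unit] .

lemma LIiP_dia_box: "LIiP (FIff (Dia M (Box M p)) (Dia M p))"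
proof (rule LIiP_iffI)
  have "derives {FAnd (K CM M) (Box M p)} (FAnd (K CM M) p)" (is "derives ?G _")
  proof (rule derives_conjI)
    have conj: "derives ?G (FAnd (K CM M) (Box M p))"
      by (simp add: derives_hyp)
    show k: "derives ?G (K CM M)"
      using conj by (rule derives_conjD1)
    have "derives ?G (Box M p)"
      using conj by (rule derives_conjD2)
    then show "derives ?G p"
      using k by (meson boxT derives_by_LIiP_imp derives_mp)
  qed
  then have "LIiP (FImp (FAnd (K CM M) (Box M p)) (FAnd (K CM M) p))"
    by (rule LIiP_impI)
  then show "LIiP (FImp (Dia M (Box M p)) (Dia M p))"
    unfolding Dia_def by (rule LIiP_not_not_mono)
  show "LIiP (FImp (Dia M p) (Dia M (Box M p)))"
    by (intro LIiP_dia_mono unit)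
qed

lemma LIiP_prefix_pair_collapse:
  "LIiP (FIff (prefix [h] M (prefix [h'] M p)) (prefix [h \<and> h'] M p))"
  by (cases h; cases h') (simp_all only: prefix.simps if_True if_False simp_thms
      LIiP_box_box LIiP_box_dia LIiP_dia_box LIiP_dia_dia)

lemma LIiP_prefix_collapse:
  "hs \<noteq> [] \<Longrightarrow> LIiP (FIff (prefix hs M p) (prefix [\<forall>h\<in>set hs. h] M p))"
proof (induction hs rule: induct_list012)
  case (3 h h' hs)
  define b where "b = (\<forall>x\<in>set (h' # hs). x)"
  have "LIiP (FIff (prefix [h] M (prefix (h' # hs) M p)) (prefix [h] M (prefix [b] M p)))"
    using "3.IH"(2) unfolding b_def by (intro LIiP_prefix_cong) simp
  moreover have "LIiP (FIff (prefix [h] M (prefix [b] M p)) (prefix [h \<and> b] M p))"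
    by (rule LIiP_prefix_pair_collapse)
  ultimately have "LIiP (FIff (prefix [h] M (prefix (h' # hs) M p)) (prefix [h \<and> b] M p))"
    by (rule LIiP_iff_trans)
  moreover have "prefix (h # h' # hs) M p = prefix [h] M (prefix (h' # hs) M p)"
    by simp
  moreover have "(\<forall>x\<in>set (h # h' # hs). x) = (h \<and> b)"
    by (simp add: b_def)
  ultimately show ?case
    by (simp only:)
qed (simp_all add: LIiP_iff_refl)

theorem corollary3:
  fixes hs :: "bool list" and M :: "('a::finite, 'b) msg" and \<phi> :: "('a, 'b) form"
  assumes "length hs \<ge> 1"
  shows "((\<forall>h\<in>set hs. h) \<longrightarrow> LIiP (FIff (prefix hs M \<phi>) (Box M \<phi>)))
       \<and> ((\<exists>h\<in>set hs. \<not> h) \<longrightarrow> LIiP (FIff (prefix hs M \<phi>) (Dia M \<phi>)))"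
proof -
  define b where "b = (\<forall>h\<in>set hs. h)"
  have "hs \<noteq> []"
    using assms by auto
  then have collapse: "LIiP (FIff (prefix hs M \<phi>) (prefix [b] M \<phi>))"
    unfolding b_def by (rule LIiP_prefix_collapse)
  have some_dia: "(\<exists>h\<in>set hs. \<not> h) \<longleftrightarrow> \<not> b"
    unfolding b_def by blast
  show ?thesis
    using collapse unfolding some_dia b_def[symmetric] by (cases b) simp_all
qed

end
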